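(* Let $H$ be a complex Hilbert space and let $\mathcal S(H)$ be the set of bounded self-adjoint operators on $H$, ordered by the logical order $\preceq$. Suppose that $\mathcal T \subseteq \mathcal S(H)$, $\mathcal T \neq \varnothing$, and that $B \in \mathcal S(H)$ is an upper bound of $\mathcal T$ with respect to $\preceq$. Then the operators $B\big(\bigwedge(P_A : A \in \mathcal T)\big)$ and $B\big(\bigvee(P_A : A \in \mathcal T)\big)$ belong to $\mathcal S(H)$, and (a) $B\big(\bigwedge(P_A : A \in \mathcal T)\big)$ is the greatest lower bound of $\mathcal T$ in $(\mathcal S(H),\preceq)$; (b) $B\big(\bigvee(P_A : A \in \mathcal T)\big)$ is the least upper bound of $\mathcal T$ in $(\mathcal S(H),\preceq)$.
   Context: For $A \in \mathcal S(H)$, $P_A$ denotes the orthogonal projection onto the closure of the range of $A$. The set of all orthogonal projections on $H$ is a complete lattice under the usual order ($P_1 \le P_2$ iff $P_1P_2 = P_1$); $\bigwedge$ and $\bigvee$ denote meet and join in this lattice. For $A,B \in \mathcal S(H)$, write $A \perp B$ if $AB = O$ (the zero operator). The logical order is defined by $A \preceq B$ iff $B = A + C$ for some $C \in \mathcal S(H)$ with $C \perp A$; equivalently, $A = BP_A$. Products such as $BP$ denote operator composition. *)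

theory Defs
  imports "HOL-Analysis.Analysis"
begin

class complex_vector = real_vector +
  fixes scaleC :: "complex \<Rightarrow> 'a \<Rightarrow> 'a"
  assumes scaleC_add_right: "scaleC a (x + y) = scaleC a x + scaleC a y"
    and scaleC_add_left: "scaleC (a + b) x = scaleC a x + scaleC b x"
    and scaleC_scaleC: "scaleC a (scaleC b x) = scaleC (a * b) x"
    and scaleC_one: "scaleC 1 x = x"
    and scaleR_scaleC: "scaleR r x = scaleC (complex_of_real r) x"

class complex_inner = complex_vector + real_normed_vector +
  fixes cinner :: "'a \<Rightarrow> 'a \<Rightarrow> complex"
  assumes cinner_commute: "cinner x y = cnj (cinner y x)"
    and cinner_add_right: "cinner x (y + z) = cinner x y + cinner x z"
    and cinner_scaleC_right: "cinner x (scaleC c y) = c * cinner x y"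
    and cinner_ge_zero: "0 \<le> Re (cinner x x)"
    and cinner_eq_zero_iff: "cinner x x = 0 \<longleftrightarrow> x = 0"
    and norm_eq_sqrt_cinner: "norm x = sqrt (Re (cinner x x))"

class chilbert_space = complex_inner + complete_space

definition bounded_clinear_op :: "('a::complex_inner \<Rightarrow> 'a) \<Rightarrow> bool" where
  "bounded_clinear_op A \<longleftrightarrow>
     (\<forall>x y. A (x + y) = A x + A y) \<and> (\<forall>c x. A (scaleC c x) = scaleC c (A x)) \<and>
     (\<exists>K. \<forall>x. norm (A x) \<le> norm x * K)"

definition selfadj_ops :: "('a::chilbert_space \<Rightarrow> 'a) set" where
  "selfadj_ops = {A. bounded_clinear_op A \<and> (\<forall>x y. cinner (A x) y = cinner x (A y))}"

definition is_oproj :: "('a::chilbert_space \<Rightarrow> 'a) \<Rightarrow> bool" where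
  "is_oproj P \<longleftrightarrow> P \<in> selfadj_ops \<and> P \<circ> P = P"

definition proj_le :: "('a::chilbert_space \<Rightarrow> 'a) \<Rightarrow> ('a \<Rightarrow> 'a) \<Rightarrow> bool" where
  "proj_le P1 P2 \<longleftrightarrow> P1 \<circ> P2 = P1"

definition range_proj :: "('a::chilbert_space \<Rightarrow> 'a) \<Rightarrow> ('a \<Rightarrow> 'a)" where
  "range_proj A = (THE P. is_oproj P \<and> range P = closure (range A))"

definition proj_Inf :: "('a::chilbert_space \<Rightarrow> 'a) set \<Rightarrow> ('a \<Rightarrow> 'a)" where
  "proj_Inf \<P> = (THE P. is_oproj P \<and> (\<forall>Q\<in>\<P>. proj_le P Q) \<and>
      (\<forall>R. is_oproj R \<and> (\<forall>Q\<in>\<P>. proj_le R Q) \<longrightarrow> proj_le R P))"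

definition proj_Sup :: "('a::chilbert_space \<Rightarrow> 'a) set \<Rightarrow> ('a \<Rightarrow> 'a)" where
  "proj_Sup \<P> = (THE P. is_oproj P \<and> (\<forall>Q\<in>\<P>. proj_le Q P) \<and>
      (\<forall>R. is_oproj R \<and> (\<forall>Q\<in>\<P>. proj_le Q R) \<longrightarrow> proj_le P R))"

definition log_le :: "('a::chilbert_space \<Rightarrow> 'a) \<Rightarrow> ('a \<Rightarrow> 'a) \<Rightarrow> bool" where
  "log_le A B \<longleftrightarrow> (\<exists>C\<in>selfadj_ops. C \<circ> A = (\<lambda>_. 0) \<and> B = (\<lambda>x. A x + C x))"

definition is_log_glb :: "('a::chilbert_space \<Rightarrow> 'a) set \<Rightarrow> ('a \<Rightarrow> 'a) \<Rightarrow> bool" where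
  "is_log_glb T G \<longleftrightarrow> G \<in> selfadj_ops \<and> (\<forall>A\<in>T. log_le G A) \<and>
     (\<forall>L\<in>selfadj_ops. (\<forall>A\<in>T. log_le L A) \<longrightarrow> log_le L G)"

definition is_log_lub :: "('a::chilbert_space \<Rightarrow> 'a) set \<Rightarrow> ('a \<Rightarrow> 'a) \<Rightarrow> bool" where
  "is_log_lub T U \<longleftrightarrow> U \<in> selfadj_ops \<and> (\<forall>A\<in>T. log_le A U) \<and>
     (\<forall>L\<in>selfadj_ops. (\<forall>A\<in>T. log_le A L) \<longrightarrow> log_le U L)"

end

theory Submission
  imports Defs
begin

text \<open>
  For self-adjoint \<open>A\<close>, \<open>B\<close> the logical order is \<open>A \<preceq> B\<close> iff \<open>A\<close> and \<open>B\<close> agree on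
  \<open>M\<^sub>A = closure (range A)\<close>. So an upper bound \<open>B\<close> of \<open>\<T>\<close> agrees with each \<open>A \<in> \<T>\<close> on
  \<open>M\<^sub>A\<close> and maps \<open>M\<^sub>A\<close> into itself; hence \<open>B\<close> leaves invariant both the intersection of
  the \<open>M\<^sub>A\<close>, which is the range of the meet \<open>P\<close> of the \<open>P\<^sub>A\<close>, and their closed span, which
  is the range of the join \<open>Q\<close>. A self-adjoint operator commutes with the projection onto a
  closed invariant subspace, so \<open>B P\<close> and \<open>B Q\<close> are self-adjoint and coincide with \<open>B\<close> on
  the closures of their ranges. A lower bound \<open>L\<close> of \<open>\<T>\<close> has \<open>M\<^sub>L \<subseteq> M\<^sub>A\<close> for all \<open>A\<close> and
  agrees with \<open>B\<close> there, so \<open>L \<preceq> B P\<close>; an upper bound \<open>L\<close> agrees with \<open>B\<close> on every \<open>M\<^sub>A\<close>,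
  hence on their closed span, so \<open>B Q \<preceq> L\<close>.
\<close>

section \<open>Complex inner product spaces\<close>

lemma scaleC_zero_right [simp]: "scaleC a (0::'a::complex_vector) = 0"
  by (metis add_cancel_left_right scaleC_add_right)

lemma scaleC_zero_left [simp]: "scaleC 0 (x::'a::complex_vector) = 0"
  by (metis add_cancel_left_right add.right_neutral scaleC_add_left)

lemma scaleC_minus_right: "scaleC a (- x::'a::complex_vector) = - scaleC a x"
  by (metis add.right_inverse add_eq_0_iff scaleC_add_right scaleC_zero_right)

lemma scaleC_diff_right: "scaleC a (x - y::'a::complex_vector) = scaleC a x - scaleC a y"
  by (metis diff_conv_add_uminus scaleC_add_right scaleC_minus_right)

lemma scaleC_minus_left: "scaleC (- a) (x::'a::complex_vector) = - scaleC a x"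
  by (metis add.right_inverse add_eq_0_iff scaleC_add_left scaleC_zero_left)

lemma cinner_add_left: "cinner (x + y) (z::'a::complex_inner) = cinner x z + cinner y z"
  by (metis cinner_add_right cinner_commute complex_cnj_add)

lemma cinner_zero_right [simp]: "cinner (x::'a::complex_inner) 0 = 0"
  by (metis add_cancel_left_right cinner_add_right)

lemma cinner_zero_left [simp]: "cinner 0 (x::'a::complex_inner) = 0"
  by (metis add_cancel_left_right cinner_add_left)

lemma cinner_minus_right: "cinner (x::'a::complex_inner) (- y) = - cinner x y"
  by (metis add.right_inverse add_eq_0_iff cinner_add_right cinner_zero_right)

lemma cinner_minus_left: "cinner (- x::'a::complex_inner) y = - cinner x y"
  by (metis add.right_inverse add_eq_0_iff cinner_add_left cinner_zero_left)

lemma cinner_diff_right: "cinner (x::'a::complex_inner) (y - z) = cinner x y - cinner x z"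
  using cinner_add_right[of x y "- z"] by (simp add: cinner_minus_right)

lemma cinner_diff_left: "cinner (x - y::'a::complex_inner) z = cinner x z - cinner y z"
  using cinner_add_left[of x "- y" z] by (simp add: cinner_minus_left)

lemma cinner_scaleC_left: "cinner (scaleC c x::'a::complex_inner) y = cnj c * cinner x y"
  by (metis cinner_commute cinner_scaleC_right complex_cnj_cnj complex_cnj_mult)

lemma cinner_zero_iff_sym: "cinner (x::'a::complex_inner) y = 0 \<longleftrightarrow> cinner y x = 0"
  by (metis cinner_commute complex_cnj_zero)

lemma cinner_self: "cinner (x::'a::complex_inner) x = complex_of_real ((norm x)\<^sup>2)"
proof -
  have "Im (cinner x x) = 0"
    by (metis cinner_commute complex_cnj_cancel_iff complex_is_Real_iff Reals_cnj_iff)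
  moreover have "Re (cinner x x) = (norm x)\<^sup>2"
    using cinner_ge_zero[of x] by (simp add: norm_eq_sqrt_cinner)
  ultimately show ?thesis by (simp add: complex_eq_iff)
qed

lemma cinner_ext:
  assumes "\<And>z. cinner (x::'a::complex_inner) z = cinner y z"
  shows "x = y"
proof -
  have "cinner (x - y) (x - y) = 0" by (simp add: cinner_diff_left assms)
  then show ?thesis by (simp only: cinner_eq_zero_iff right_minus_eq)
qed

lemma norm_scaleC: "norm (scaleC c (x::'a::complex_inner)) = cmod c * norm x"
proof -
  have "complex_of_real ((norm (scaleC c x))\<^sup>2) = cinner (scaleC c x) (scaleC c x)"
    by (simp only: cinner_self)
  also have "\<dots> = (c * cnj c) * cinner x x"
    by (simp add: cinner_scaleC_left cinner_scaleC_right)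
  also have "\<dots> = complex_of_real ((cmod c)\<^sup>2) * complex_of_real ((norm x)\<^sup>2)"
    by (simp only: cinner_self complex_norm_square)
  also have "\<dots> = complex_of_real ((cmod c * norm x)\<^sup>2)"
    by (simp add: power_mult_distrib)
  finally show ?thesis by (simp add: power2_eq_iff_nonneg del: of_real_power)
qed

lemma norm_add_sq:
  "(norm (x + y::'a::complex_inner))\<^sup>2 = (norm x)\<^sup>2 + (norm y)\<^sup>2 + 2 * Re (cinner x y)"
proof -
  have "cinner (x + y) (x + y) = cinner x x + cinner y y + (cinner x y + cnj (cinner x y))"
    by (simp add: cinner_add_left cinner_add_right cinner_commute[of y x])
  then have "Re (cinner (x + y) (x + y)) = Re (cinner x x) + Re (cinner y y) + 2 * Re (cinner x y)"
    by simp
  then show ?thesis by (simp add: cinner_self)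
qed

lemma parallelogram_law:
  "(norm (x + y::'a::complex_inner))\<^sup>2 + (norm (x - y))\<^sup>2 = 2 * (norm x)\<^sup>2 + 2 * (norm y)\<^sup>2"
  using norm_add_sq[of x y] norm_add_sq[of x "- y"] by (simp add: cinner_minus_right)

lemma bounded_linear_scaleC: "bounded_linear (scaleC c :: 'a::complex_inner \<Rightarrow> 'a)"
proof
  fix x y :: 'a and r :: real
  show "scaleC c (x + y) = scaleC c x + scaleC c y" by (rule scaleC_add_right)
  show "scaleC c (scaleR r x) = scaleR r (scaleC c x)"
    by (simp add: scaleR_scaleC scaleC_scaleC mult.commute)
  show "\<exists>K. \<forall>x::'a. norm (scaleC c x) \<le> norm x * K"
    by (rule exI[of _ "cmod c"]) (simp add: norm_scaleC mult.commute)
qed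

lemma bounded_clinear_op_bounded_linear: "bounded_clinear_op A \<Longrightarrow> bounded_linear A"
  unfolding bounded_clinear_op_def by (metis bounded_linear_intro scaleR_scaleC)

lemma bounded_clinear_opI:
  "bounded_linear A \<Longrightarrow> (\<And>c x. A (scaleC c x) = scaleC c (A x)) \<Longrightarrow> bounded_clinear_op A"
  unfolding bounded_clinear_op_def
  using bounded_linear.bounded linear_add bounded_linear.linear by blast

lemma bounded_clinear_op_scaleC: "bounded_clinear_op A \<Longrightarrow> A (scaleC c x) = scaleC c (A x)"
  by (simp add: bounded_clinear_op_def)

lemma bounded_clinear_op_id: "bounded_clinear_op (\<lambda>x. x)"
  unfolding bounded_clinear_op_def by (auto intro: exI[of _ 1])

lemma bounded_clinear_op_zero: "bounded_clinear_op (\<lambda>_. 0)"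
  unfolding bounded_clinear_op_def by (auto intro: exI[of _ 0])

lemma bounded_clinear_op_comp:
  assumes "bounded_clinear_op A" and "bounded_clinear_op B"
  shows "bounded_clinear_op (A \<circ> B)"
proof (rule bounded_clinear_opI)
  show "bounded_linear (A \<circ> B)"
    using bounded_linear_compose[OF assms[THEN bounded_clinear_op_bounded_linear]]
    by (simp add: comp_def)
qed (simp add: assms[THEN bounded_clinear_op_scaleC])

section \<open>Closed subspaces and the projection theorem\<close>

definition csubspace :: "'a::complex_vector set \<Rightarrow> bool" where
  "csubspace M \<longleftrightarrow> 0 \<in> M \<and> (\<forall>x\<in>M. \<forall>y\<in>M. x + y \<in> M) \<and> (\<forall>c. \<forall>x\<in>M. scaleC c x \<in> M)"

definition closed_csubspace :: "'a::{complex_vector, topological_space} set \<Rightarrow> bool" where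
  "closed_csubspace M \<longleftrightarrow> csubspace M \<and> closed M"

lemma csubspace_0: "csubspace M \<Longrightarrow> 0 \<in> M"
  by (simp add: csubspace_def)

lemma csubspace_add: "csubspace M \<Longrightarrow> x \<in> M \<Longrightarrow> y \<in> M \<Longrightarrow> x + y \<in> M"
  by (simp add: csubspace_def)

lemma csubspace_scaleC: "csubspace M \<Longrightarrow> x \<in> M \<Longrightarrow> scaleC c x \<in> M"
  by (simp add: csubspace_def)

lemma csubspace_scaleR: "csubspace M \<Longrightarrow> x \<in> M \<Longrightarrow> scaleR r x \<in> M"
  by (simp add: csubspace_def scaleR_scaleC)

lemma csubspace_diff: "csubspace M \<Longrightarrow> x \<in> M \<Longrightarrow> y \<in> M \<Longrightarrow> x - y \<in> M"
  by (metis csubspace_add csubspace_scaleC diff_conv_add_uminus scaleC_minus_left scaleC_one)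

lemma csubspace_Inter: "(\<And>N. N \<in> \<N> \<Longrightarrow> csubspace N) \<Longrightarrow> csubspace (\<Inter>\<N>)"
  unfolding csubspace_def by blast

lemma closed_csubspace_Inter:
  "(\<And>N. N \<in> \<N> \<Longrightarrow> closed_csubspace N) \<Longrightarrow> closed_csubspace (\<Inter>\<N>)"
  unfolding closed_csubspace_def by (blast intro: csubspace_Inter closed_Inter)

lemma csubspace_range: "bounded_clinear_op A \<Longrightarrow> csubspace (range A)"
  unfolding csubspace_def bounded_clinear_op_def
  by (metis (no_types, lifting) add_cancel_right_right rangeE rangeI)

lemma csubspace_closure:
  fixes S :: "'a::complex_inner set"
  assumes S: "csubspace S"
  shows "csubspace (closure S)"
  unfolding csubspace_def
proof (intro conjI ballI allI)
  show "0 \<in> closure S" using csubspace_0[OF S] closure_subset by blast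
next
  fix x y assume "x \<in> closure S" and "y \<in> closure S"
  then obtain f g where "\<forall>n. f n \<in> S" "f \<longlonglongrightarrow> x" "\<forall>n. g n \<in> S" "g \<longlonglongrightarrow> y"
    by (meson closure_sequential)
  then have "\<forall>n. f n + g n \<in> S" and "(\<lambda>n. f n + g n) \<longlonglongrightarrow> x + y"
    by (auto intro: tendsto_add csubspace_add[OF S])
  then show "x + y \<in> closure S" by (meson closure_sequential)
next
  fix c x assume "x \<in> closure S"
  moreover have "scaleC c ` closure S \<subseteq> closure S"
    using S csubspace_scaleC closure_subset
    by (intro image_closure_subset linear_continuous_on bounded_linear_scaleC) blast+
  ultimately show "scaleC c x \<in> closure S" by blast
qed

lemma closed_csubspace_closure_range:
  "bounded_clinear_op (A::'a::complex_inner \<Rightarrow> 'a) \<Longrightarrow> closed_csubspace (closure (range A))"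
  by (simp add: closed_csubspace_def csubspace_closure csubspace_range)

lemma closed_csubspace_vimage:
  assumes "bounded_clinear_op B" and "closed_csubspace M"
  shows "closed_csubspace {x. B x \<in> M}"
proof -
  have "closed (B -` M)"
    using assms by (intro closed_vimage linear_continuous_on bounded_clinear_op_bounded_linear)
      (simp_all add: closed_csubspace_def)
  moreover have "csubspace {x. B x \<in> M}"
    using assms unfolding closed_csubspace_def csubspace_def bounded_clinear_op_def
    by (metis (mono_tags, lifting) add_cancel_right_right mem_Collect_eq)
  ultimately show ?thesis by (simp add: closed_csubspace_def vimage_def)
qed

lemma closed_csubspace_eq:
  assumes "bounded_clinear_op A" and "bounded_clinear_op B"
  shows "closed_csubspace {x. A x = B x}"
proof -
  have "csubspace {x. A x = B x}"
    using assms unfolding csubspace_def bounded_clinear_op_def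
    by (metis (mono_tags, lifting) add_cancel_right_right mem_Collect_eq scaleC_zero_right)
  moreover have "closed {x. A x = B x}"
    using assms by (intro closed_Collect_eq linear_continuous_on bounded_clinear_op_bounded_linear)
  ultimately show ?thesis by (simp add: closed_csubspace_def)
qed

lemma cinner_eq_zero_if_norm_minimal:
  fixes z y :: "'a::complex_inner"
  assumes minimal: "\<And>t. (norm z)\<^sup>2 \<le> (norm (z - scaleC t y))\<^sup>2"
  shows "cinner z y = 0"
proof (rule ccontr)
  assume nonzero: "cinner z y \<noteq> 0"
  define c where "c = cinner z y"
  define s where "s = 1 / ((norm y)\<^sup>2 + 1)"
  have "0 < (norm y)\<^sup>2 + 1" by (simp add: add_nonneg_pos)
  then have s_pos: "s > 0" and sy: "s * (norm y)\<^sup>2 < 1"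
    by (simp_all add: s_def divide_less_eq)
  text \<open>Moving from \<open>z\<close> by the small multiple \<open>s \<cdot> cnj c\<close> of \<open>y\<close> strictly decreases the norm.\<close>
  define t where "t = complex_of_real s * cnj c"
  have "Re (t * c) = s * (cmod c)\<^sup>2"
    by (simp add: t_def mult.assoc complex_norm_square[symmetric] mult.commute[of "cnj c"])
  moreover have "norm (scaleC t y) = s * cmod c * norm y"
    using s_pos by (simp add: t_def norm_scaleC norm_mult)
  moreover have "cinner z (scaleC t y) = t * c"
    by (simp add: cinner_scaleC_right c_def)
  ultimately have "(norm (z - scaleC t y))\<^sup>2
      = (norm z)\<^sup>2 + (s * cmod c * norm y)\<^sup>2 - 2 * (s * (cmod c)\<^sup>2)"
    using norm_add_sq[of z "- scaleC t y"] by (simp add: cinner_minus_right)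
  then have "0 \<le> (s * cmod c * norm y)\<^sup>2 - 2 * (s * (cmod c)\<^sup>2)"
    using minimal[of t] by linarith
  also have "\<dots> = (s * (cmod c)\<^sup>2) * (s * (norm y)\<^sup>2 - 2)"
    by (simp add: power2_eq_square algebra_simps)
  also have "\<dots> < 0"
    using nonzero s_pos sy by (intro mult_pos_neg) (simp_all add: c_def)
  finally show False by simp
qed

lemma norm_diff_sq_le_if_dist_lower_bound:
  fixes x :: "'a::complex_inner"
  assumes M: "csubspace M" and d: "\<forall>m\<in>M. d \<le> (norm (x - m))\<^sup>2" and "u \<in> M" "v \<in> M"
  shows "(norm (u - v))\<^sup>2 \<le> 2 * (norm (x - u))\<^sup>2 + 2 * (norm (x - v))\<^sup>2 - 4 * d"
proof -
  define w where "w = scaleR (1/2) (u + v)"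
  have "w \<in> M" unfolding w_def using assms by (simp add: csubspace_add csubspace_scaleR)
  have "(x - u) + (x - v) = scaleR 2 (x - w)"
    by (simp add: w_def algebra_simps scaleR_2)
  then have "(norm ((x - u) + (x - v)))\<^sup>2 = 4 * (norm (x - w))\<^sup>2"
    by (simp add: power_mult_distrib)
  moreover have "(x - u) - (x - v) = - (u - v)" by simp
  ultimately show ?thesis
    using parallelogram_law[of "x - u" "x - v"] d \<open>w \<in> M\<close> by (simp only: norm_minus_cancel) fastforce
qed

lemma Cauchy_if_minimizing_sequence:
  fixes x :: "'a::complex_inner"
  assumes M: "csubspace M" and d: "\<forall>m\<in>M. d \<le> (norm (x - m))\<^sup>2"
    and f: "\<And>n. f n \<in> M" "\<And>n. (norm (x - f n))\<^sup>2 < d + 1 / (real n + 1)"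
  shows "Cauchy f"
proof (rule metric_CauchyI)
  fix e :: real assume e: "e > 0"
  obtain N :: nat where "4 / e\<^sup>2 < real N" using reals_Archimedean2 by blast
  then have N: "4 / (real N + 1) < e\<^sup>2"
    using e by (simp add: field_simps) (smt (verit) zero_less_power)
  show "\<exists>N. \<forall>m\<ge>N. \<forall>n\<ge>N. dist (f m) (f n) < e"
  proof (intro exI allI impI)
    fix m n assume "N \<le> m" "N \<le> n"
    then have "2 / (real m + 1) \<le> 2 / (real N + 1)" "2 / (real n + 1) \<le> 2 / (real N + 1)"
      by (auto intro!: divide_left_mono)
    then have "(norm (f m - f n))\<^sup>2 < e\<^sup>2"
      using norm_diff_sq_le_if_dist_lower_bound[OF M d f(1) f(1), of m n] f(2)[of m] f(2)[of n] N
      by linarith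
    then show "dist (f m) (f n) < e" using e by (simp add: dist_norm power_less_imp_less_base)
  qed
qed

lemma nearest_point_exists:
  fixes M :: "'a::chilbert_space set"
  assumes "closed_csubspace M"
  shows "\<exists>m\<in>M. \<forall>m'\<in>M. (norm (x - m))\<^sup>2 \<le> (norm (x - m'))\<^sup>2"
proof -
  have M: "csubspace M" "closed M" using assms by (simp_all add: closed_csubspace_def)
  define D where "D = (\<lambda>m. (norm (x - m))\<^sup>2) ` M"
  have "D \<noteq> {}" using csubspace_0[OF M(1)] by (auto simp: D_def)
  have "bdd_below D" unfolding D_def by (rule bdd_belowI[of _ 0]) auto
  then have d: "\<forall>m\<in>M. Inf D \<le> (norm (x - m))\<^sup>2" by (auto simp: D_def intro: cInf_lower)
  have "\<exists>m\<in>M. (norm (x - m))\<^sup>2 < Inf D + 1 / (real n + 1)" for n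
    using cInf_lessD[OF \<open>D \<noteq> {}\<close>, of "Inf D + 1 / (real n + 1)"] by (auto simp: D_def)
  then obtain f where f: "\<And>n. f n \<in> M" "\<And>n. (norm (x - f n))\<^sup>2 < Inf D + 1 / (real n + 1)"
    by metis
  then obtain m where lim: "f \<longlonglongrightarrow> m"
    using Cauchy_if_minimizing_sequence[OF M(1) d] Cauchy_convergent_iff convergent_def by blast
  have "m \<in> M" using closed_sequentially[OF M(2) _ lim] f(1) by blast
  have "(\<lambda>n. 1 / (real n + 1)) \<longlonglongrightarrow> 0"
    using LIMSEQ_inverse_real_of_nat by (simp add: inverse_eq_divide add.commute)
  then have "(\<lambda>n. Inf D + 1 / (real n + 1)) \<longlonglongrightarrow> Inf D + 0"
    by (intro tendsto_add tendsto_const)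
  moreover have "(\<lambda>n. (norm (x - f n))\<^sup>2) \<longlonglongrightarrow> (norm (x - m))\<^sup>2"
    using lim by (intro tendsto_intros)
  ultimately have "(norm (x - m))\<^sup>2 \<le> Inf D + 0"
    using f(2) by (intro LIMSEQ_le) (auto intro: less_imp_le)
  then show ?thesis using \<open>m \<in> M\<close> d by (metis add.right_neutral order_trans)
qed

lemma orthogonal_decomposition_exists:
  fixes M :: "'a::chilbert_space set"
  assumes "closed_csubspace M"
  shows "\<exists>m\<in>M. \<forall>y\<in>M. cinner (x - m) y = 0"
proof -
  obtain m where m: "m \<in> M" and minimal: "\<forall>m'\<in>M. (norm (x - m))\<^sup>2 \<le> (norm (x - m'))\<^sup>2"
    using nearest_point_exists[OF assms] by blast
  have "cinner (x - m) y = 0" if "y \<in> M" for y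
  proof (rule cinner_eq_zero_if_norm_minimal)
    fix t
    have "m + scaleC t y \<in> M"
      using assms m that by (simp add: closed_csubspace_def csubspace_add csubspace_scaleC)
    from minimal[rule_format, OF this]
    show "(norm (x - m))\<^sup>2 \<le> (norm (x - m - scaleC t y))\<^sup>2" by (simp add: algebra_simps)
  qed
  with m show ?thesis by blast
qed

definition proj_onto :: "'a::chilbert_space set \<Rightarrow> 'a \<Rightarrow> 'a" where
  "proj_onto M x = (THE m. m \<in> M \<and> (\<forall>y\<in>M. cinner (x - m) y = 0))"

lemma proj_onto_eq:
  fixes M :: "'a::chilbert_space set"
  assumes M: "csubspace M" and m: "m \<in> M" "\<forall>y\<in>M. cinner (x - m) y = 0"
  shows "proj_onto M x = m"
  unfolding proj_onto_def
proof (rule the_equality)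
  fix m' assume m': "m' \<in> M \<and> (\<forall>y\<in>M. cinner (x - m') y = 0)"
  then have "m - m' \<in> M" using M m by (simp add: csubspace_diff)
  then have "cinner (m - m') (m - m') = 0"
    using m m' cinner_diff_left[of "x - m'" "x - m" "m - m'"] by simp
  then show "m' = m" by (simp only: cinner_eq_zero_iff) simp
qed (use m in blast)

lemma proj_onto_orthogonal:
  fixes M :: "'a::chilbert_space set"
  assumes "closed_csubspace M"
  shows "proj_onto M x \<in> M" "y \<in> M \<Longrightarrow> cinner (x - proj_onto M x) y = 0"
proof -
  obtain m where "m \<in> M" "\<forall>y\<in>M. cinner (x - m) y = 0"
    using orthogonal_decomposition_exists[OF assms] by blast
  with proj_onto_eq assms show "proj_onto M x \<in> M" "y \<in> M \<Longrightarrow> cinner (x - proj_onto M x) y = 0"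
    by (auto simp: closed_csubspace_def)
qed

lemma is_oproj_proj_onto:
  fixes M :: "'a::chilbert_space set"
  assumes M: "closed_csubspace M"
  shows "is_oproj (proj_onto M)" and "range (proj_onto M) = M"
proof -
  let ?p = "proj_onto M"
  have S: "csubspace M" using M by (simp add: closed_csubspace_def)
  note mem = proj_onto_orthogonal(1)[OF M] and orth = proj_onto_orthogonal(2)[OF M]
  have orth': "cinner y (x - ?p x) = 0" if "y \<in> M" for x y
    using orth[OF that] cinner_zero_iff_sym by blast
  have fixed: "?p m = m" if "m \<in> M" for m using proj_onto_eq[OF S that] by simp
  have add: "?p (x + y) = ?p x + ?p y" for x y
  proof (rule proj_onto_eq[OF S])
    show "?p x + ?p y \<in> M" using mem by (simp add: csubspace_add[OF S])
    have split: "x + y - (?p x + ?p y) = (x - ?p x) + (y - ?p y)" by simp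
    show "\<forall>z\<in>M. cinner (x + y - (?p x + ?p y)) z = 0"
      unfolding split using orth by (simp add: cinner_add_left)
  qed
  have scale: "?p (scaleC c x) = scaleC c (?p x)" for c x
    using orth[of _ x] mem
    by (intro proj_onto_eq[OF S]) (simp_all add: csubspace_scaleC[OF S] cinner_scaleC_left
        flip: scaleC_diff_right)
  have "(norm (?p x))\<^sup>2 \<le> (norm x)\<^sup>2" for x
    using norm_add_sq[of "?p x" "x - ?p x"] orth'[OF mem[of x], of x] by simp
  then have "norm (?p x) \<le> norm x * 1" for x by (metis mult_1_right norm_ge_zero power2_le_imp_le)
  with add scale have "bounded_clinear_op ?p" unfolding bounded_clinear_op_def by blast
  moreover have "cinner (?p x) y = cinner x (?p y)" for x y
    using cinner_diff_right[of "?p x" y "?p y"] cinner_diff_left[of x "?p x" "?p y"]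
      orth'[OF mem[of x], of y] orth[OF mem[of y], of x] by simp
  ultimately have "?p \<in> selfadj_ops" by (simp add: selfadj_ops_def)
  moreover have "?p \<circ> ?p = ?p" using fixed mem by (simp add: fun_eq_iff)
  ultimately show "is_oproj ?p" by (simp add: is_oproj_def)
  show "range ?p = M" using mem fixed by (metis image_subsetI rangeI subsetI subset_antisym)
qed

section \<open>Self-adjoint operators and orthogonal projections\<close>

lemma selfadj_cinner: "A \<in> selfadj_ops \<Longrightarrow> cinner (A x) y = cinner x (A y)"
  by (simp add: selfadj_ops_def)

lemma selfadj_bounded_clinear_op: "A \<in> selfadj_ops \<Longrightarrow> bounded_clinear_op A"
  by (simp add: selfadj_ops_def)

lemma selfadj_diff:
  assumes A: "A \<in> selfadj_ops" and B: "B \<in> selfadj_ops"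
  shows "(\<lambda>x. B x - A x) \<in> selfadj_ops"
proof -
  have "bounded_clinear_op (\<lambda>x. B x - A x)"
  proof (rule bounded_clinear_opI)
    show "bounded_linear (\<lambda>x. B x - A x)"
      using A B by (intro bounded_linear_sub bounded_clinear_op_bounded_linear selfadj_bounded_clinear_op)
  qed (simp add: A B selfadj_bounded_clinear_op bounded_clinear_op_scaleC scaleC_diff_right)
  moreover have "cinner (B x - A x) y = cinner x (B y - A y)" for x y
    by (simp add: cinner_diff_left cinner_diff_right selfadj_cinner[OF A] selfadj_cinner[OF B])
  ultimately show ?thesis by (simp add: selfadj_ops_def)
qed

lemma is_oproj_selfadj: "is_oproj P \<Longrightarrow> P \<in> selfadj_ops"
  by (simp add: is_oproj_def)

lemma is_oproj_range_iff: "is_oproj P \<Longrightarrow> y \<in> range P \<longleftrightarrow> P y = y"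
  unfolding is_oproj_def by (metis comp_apply rangeE rangeI)

lemma closed_csubspace_range_oproj:
  assumes P: "is_oproj P"
  shows "closed_csubspace (range P)"
proof -
  have "closed_csubspace {x. P x = x}"
    using P by (intro closed_csubspace_eq bounded_clinear_op_id)
      (simp add: is_oproj_selfadj selfadj_bounded_clinear_op)
  moreover have "range P = {x. P x = x}" using is_oproj_range_iff[OF P] by auto
  ultimately show ?thesis by simp
qed

lemma oproj_eq_proj_onto:
  assumes P: "is_oproj P"
  shows "P = proj_onto (range P)"
proof
  fix x
  have "P (P z) = P z" for z using P by (simp add: is_oproj_def fun_eq_iff)
  then have "cinner (x - P x) (P z) = 0" for z
    by (simp add: cinner_diff_left selfadj_cinner[OF is_oproj_selfadj[OF P]])
  then show "P x = proj_onto (range P) x"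
    using closed_csubspace_range_oproj[OF P]
    by (intro proj_onto_eq[symmetric]) (auto simp: closed_csubspace_def)
qed

lemma oproj_eqI: "is_oproj P \<Longrightarrow> is_oproj Q \<Longrightarrow> range P = range Q \<Longrightarrow> P = Q"
  by (metis oproj_eq_proj_onto)

lemma proj_le_iff_range_subset:
  assumes P: "is_oproj P" and Q: "is_oproj Q"
  shows "proj_le P Q \<longleftrightarrow> range P \<subseteq> range Q"
proof -
  note sP = selfadj_cinner[OF is_oproj_selfadj[OF P]]
    and sQ = selfadj_cinner[OF is_oproj_selfadj[OF Q]]
  text \<open>Taking adjoints, \<open>P Q = P\<close> is equivalent to \<open>Q P = P\<close>.\<close>
  have "(\<forall>x. P (Q x) = P x) \<longleftrightarrow> (\<forall>x. Q (P x) = P x)"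
  proof
    assume "\<forall>x. P (Q x) = P x"
    then show "\<forall>x. Q (P x) = P x" by (intro allI cinner_ext) (simp add: sP sQ)
  next
    assume "\<forall>x. Q (P x) = P x"
    then show "\<forall>x. P (Q x) = P x" by (intro allI cinner_ext) (simp add: sP sQ)
  qed
  then show ?thesis
    using is_oproj_range_iff[OF Q] by (auto simp: proj_le_def fun_eq_iff)
qed

lemma proj_le_antisym:
  "is_oproj P \<Longrightarrow> is_oproj Q \<Longrightarrow> proj_le P Q \<Longrightarrow> proj_le Q P \<Longrightarrow> P = Q"
  by (simp add: oproj_eqI proj_le_iff_range_subset)

lemma proj_Inf_eqI:
  assumes "is_oproj P" "\<forall>Q\<in>\<P>. proj_le P Q"
    and "\<And>R. is_oproj R \<Longrightarrow> \<forall>Q\<in>\<P>. proj_le R Q \<Longrightarrow> proj_le R P"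
  shows "proj_Inf \<P> = P"
  unfolding proj_Inf_def by (rule the_equality) (use assms proj_le_antisym in blast)+

lemma proj_Sup_eqI:
  assumes "is_oproj P" "\<forall>Q\<in>\<P>. proj_le Q P"
    and "\<And>R. is_oproj R \<Longrightarrow> \<forall>Q\<in>\<P>. proj_le Q R \<Longrightarrow> proj_le P R"
  shows "proj_Sup \<P> = P"
  unfolding proj_Sup_def by (rule the_equality) (use assms proj_le_antisym in blast)+

lemma range_proj_Inf:
  assumes "\<forall>Q\<in>\<P>. is_oproj Q"
  shows "is_oproj (proj_Inf \<P>)" and "range (proj_Inf \<P>) = (\<Inter>Q\<in>\<P>. range Q)"
proof -
  let ?M = "\<Inter>Q\<in>\<P>. range Q"
  have "closed_csubspace ?M"
    using assms by (auto intro!: closed_csubspace_Inter closed_csubspace_range_oproj)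
  note M = is_oproj_proj_onto[OF this]
  have "proj_Inf \<P> = proj_onto ?M"
    using assms M by (intro proj_Inf_eqI) (force simp: proj_le_iff_range_subset)+
  with M show "is_oproj (proj_Inf \<P>)" "range (proj_Inf \<P>) = ?M" by simp_all
qed

lemma range_proj_Sup:
  assumes "\<forall>Q\<in>\<P>. is_oproj Q"
  shows "is_oproj (proj_Sup \<P>)"
    and "Q \<in> \<P> \<Longrightarrow> range Q \<subseteq> range (proj_Sup \<P>)"
    and "closed_csubspace N \<Longrightarrow> \<forall>Q\<in>\<P>. range Q \<subseteq> N \<Longrightarrow> range (proj_Sup \<P>) \<subseteq> N"
proof -
  let ?M = "\<Inter>{N. closed_csubspace N \<and> (\<forall>Q\<in>\<P>. range Q \<subseteq> N)}"
  have "closed_csubspace ?M" by (intro closed_csubspace_Inter) blast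
  note M = is_oproj_proj_onto[OF this]
  have "proj_Sup \<P> = proj_onto ?M"
  proof (rule proj_Sup_eqI[OF M(1)])
    show "\<forall>Q\<in>\<P>. proj_le Q (proj_onto ?M)"
      using assms M by (force simp: proj_le_iff_range_subset)
    fix R assume "is_oproj R" "\<forall>Q\<in>\<P>. proj_le Q R"
    then show "proj_le (proj_onto ?M) R"
      using assms M closed_csubspace_range_oproj
      by (subst proj_le_iff_range_subset) (auto simp: proj_le_iff_range_subset intro!: Inter_lower)
  qed
  with M show "is_oproj (proj_Sup \<P>)"
    and "Q \<in> \<P> \<Longrightarrow> range Q \<subseteq> range (proj_Sup \<P>)"
    and "closed_csubspace N \<Longrightarrow> \<forall>Q\<in>\<P>. range Q \<subseteq> N \<Longrightarrow> range (proj_Sup \<P>) \<subseteq> N"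
    by auto
qed

lemma range_proj:
  fixes A :: "'a::chilbert_space \<Rightarrow> 'a"
  assumes "bounded_clinear_op A"
  shows "is_oproj (range_proj A)" and "range (range_proj A) = closure (range A)"
proof -
  note M = is_oproj_proj_onto[OF closed_csubspace_closure_range[OF assms]]
  have "range_proj A = proj_onto (closure (range A))"
    unfolding range_proj_def by (rule the_equality) (use M oproj_eqI in metis)+
  with M show "is_oproj (range_proj A)" "range (range_proj A) = closure (range A)" by simp_all
qed

lemma selfadj_range_proj_right:
  assumes A: "A \<in> selfadj_ops"
  shows "A (range_proj A x) = A x"
proof (rule cinner_ext)
  note P = range_proj[OF selfadj_bounded_clinear_op[OF A]]
  fix y
  have "A y \<in> range (range_proj A)" unfolding P(2) by (meson closure_subset rangeI subsetD)
  then have "range_proj A (A y) = A y" using is_oproj_range_iff[OF P(1)] by simp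
  then show "cinner (A (range_proj A x)) y = cinner (A x) y"
    by (simp add: selfadj_cinner[OF A] selfadj_cinner[OF is_oproj_selfadj[OF P(1)]])
qed

lemma selfadj_comp_oproj_if_invariant:
  assumes B: "B \<in> selfadj_ops" and P: "is_oproj P" and invariant: "\<And>x. B (P x) \<in> range P"
  shows "B \<circ> P \<in> selfadj_ops"
proof -
  note sP = selfadj_cinner[OF is_oproj_selfadj[OF P]] and sB = selfadj_cinner[OF B]
  have fixed: "P (B (P x)) = B (P x)" for x using invariant is_oproj_range_iff[OF P] by blast
  have commute: "B (P x) = P (B x)" for x
  proof (rule cinner_ext)
    fix y
    have "cinner (P (B x)) y = cinner x (B (P y))" by (simp add: sP sB)
    also have "\<dots> = cinner x (P (B (P y)))" by (simp add: fixed)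
    also have "\<dots> = cinner (P (B (P x))) y" by (simp add: sP sB)
    finally show "cinner (B (P x)) y = cinner (P (B x)) y" by (simp add: fixed)
  qed
  have "cinner (B (P x)) y = cinner x (B (P y))" for x y
    by (simp add: sB sP commute)
  then show ?thesis
    using bounded_clinear_op_comp[OF B[THEN selfadj_bounded_clinear_op]
        P[THEN is_oproj_selfadj, THEN selfadj_bounded_clinear_op]]
    by (simp add: selfadj_ops_def)
qed

lemma closure_range_comp_oproj_subset:
  assumes P: "is_oproj P" and invariant: "\<And>x. B (P x) \<in> range P"
  shows "closure (range (B \<circ> P)) \<subseteq> range P"
  using invariant closed_csubspace_range_oproj[OF P]
  by (intro closure_minimal) (auto simp: closed_csubspace_def)

section \<open>The logical order\<close>

lemma log_le_iff_eq_on_closure_range: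
  assumes A: "A \<in> selfadj_ops" and B: "B \<in> selfadj_ops"
  shows "log_le A B \<longleftrightarrow> (\<forall>z\<in>closure (range A). A z = B z)"
proof
  assume "log_le A B"
  then obtain C where C: "C \<in> selfadj_ops" "C \<circ> A = (\<lambda>_. 0)" "B = (\<lambda>x. A x + C x)"
    unfolding log_le_def by blast
  have "closed_csubspace {x. C x = 0}"
    using closed_csubspace_eq[OF selfadj_bounded_clinear_op[OF C(1)] bounded_clinear_op_zero]
    by simp
  moreover have "range A \<subseteq> {x. C x = 0}" using C(2) by (auto simp: fun_eq_iff)
  ultimately have "closure (range A) \<subseteq> {x. C x = 0}"
    by (simp add: closed_csubspace_def closure_minimal)
  then show "\<forall>z\<in>closure (range A). A z = B z" using C(3) by auto
next
  assume agree: "\<forall>z\<in>closure (range A). A z = B z"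
  have "B (A x) = A (A x)" for x
    using agree closure_subset by (metis rangeI subsetD)
  then have "(\<lambda>x. B x - A x) \<circ> A = (\<lambda>_. 0)" by (simp add: fun_eq_iff)
  moreover have "B = (\<lambda>x. A x + (B x - A x))" by simp
  ultimately show "log_le A B"
    unfolding log_le_def using selfadj_diff[OF A B] by blast
qed

lemma log_le_eq_on_closure_range:
  assumes "log_le A B" "A \<in> selfadj_ops" "B \<in> selfadj_ops" "z \<in> closure (range A)"
  shows "A z = B z"
  using assms log_le_iff_eq_on_closure_range by blast

lemma closure_range_subset_if_log_le:
  assumes L: "L \<in> selfadj_ops" and A: "A \<in> selfadj_ops" and "log_le L A"
  shows "closure (range L) \<subseteq> closure (range A)"
proof (rule closure_mono, rule image_subsetI)
  fix x
  have "range_proj L x \<in> closure (range L)"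
    using range_proj(2)[OF selfadj_bounded_clinear_op[OF L]] by blast
  then have "A (range_proj L x) = L (range_proj L x)"
    using log_le_eq_on_closure_range[OF assms(3) L A] by simp
  also have "\<dots> = L x" by (rule selfadj_range_proj_right[OF L])
  finally show "L x \<in> range A" by (metis rangeI)
qed

lemma log_le_invariant_closure_range:
  assumes "log_le A B" "A \<in> selfadj_ops" "B \<in> selfadj_ops" "z \<in> closure (range A)"
  shows "B z \<in> closure (range A)"
  using log_le_eq_on_closure_range[OF assms] closure_subset by (metis rangeI subsetD)

lemma is_log_glb_comp_proj_Inf:
  assumes T: "T \<subseteq> selfadj_ops" "T \<noteq> {}"
    and B: "B \<in> selfadj_ops" and upper: "\<forall>A\<in>T. log_le A B"
  shows "is_log_glb T (B \<circ> proj_Inf (range_proj ` T))"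
proof -
  define P where "P = proj_Inf (range_proj ` T)"
  have saT: "A \<in> selfadj_ops" if "A \<in> T" for A using that T by blast
  note PA = range_proj[OF selfadj_bounded_clinear_op[OF saT]]
  have agree: "A z = B z" if "A \<in> T" "z \<in> closure (range A)" for A z
    using log_le_eq_on_closure_range[OF bspec[OF upper] saT B] that by blast
  have "\<forall>R\<in>range_proj ` T. is_oproj R" using PA(1) by blast
  note Inf = range_proj_Inf[OF this, folded P_def]
  have range_P: "range P = (\<Inter>A\<in>T. closure (range A))"
    unfolding Inf(2) by (auto simp: PA(2))
  have "B (P x) \<in> range P" for x
  proof -
    have "P x \<in> (\<Inter>A\<in>T. closure (range A))" unfolding range_P[symmetric] by (rule rangeI)
    then have "P x \<in> closure (range A)" if "A \<in> T" for A using that by blast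
    then show ?thesis
      unfolding range_P using log_le_invariant_closure_range[OF bspec[OF upper] saT B] by blast
  qed
  note BP = selfadj_comp_oproj_if_invariant[OF B Inf(1) this]
    and closure_BP = closure_range_comp_oproj_subset[where B = B, OF Inf(1) this]
  have on_range: "(B \<circ> P) z = B z" if "z \<in> range P" for z
    using that is_oproj_range_iff[OF Inf(1)] by simp
  have lower: "log_le (B \<circ> P) A" if A: "A \<in> T" for A
  proof -
    have "(B \<circ> P) z = A z" if "z \<in> closure (range (B \<circ> P))" for z
    proof -
      have z: "z \<in> range P" using closure_BP that by blast
      then have "z \<in> closure (range A)" using A unfolding range_P by blast
      with z show ?thesis using on_range agree[OF A] by simp
    qed
    then show ?thesis using log_le_iff_eq_on_closure_range[OF BP saT[OF A]] by blast
  qed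
  have "log_le L (B \<circ> P)" if L: "L \<in> selfadj_ops" "\<forall>A\<in>T. log_le L A" for L
  proof -
    have sub: "closure (range L) \<subseteq> closure (range A)" if "A \<in> T" for A
      using closure_range_subset_if_log_le[OF L(1) saT bspec[OF L(2)]] that by blast
    obtain A0 where A0: "A0 \<in> T" using T(2) by blast
    have "L z = (B \<circ> P) z" if z: "z \<in> closure (range L)" for z
    proof -
      have "L z = A0 z"
        using log_le_eq_on_closure_range[OF bspec[OF L(2) A0] L(1) saT[OF A0] z] .
      also have "\<dots> = B z" using agree[OF A0] sub[OF A0] z by blast
      also have "\<dots> = (B \<circ> P) z"
      proof -
        have "z \<in> range P" unfolding range_P using sub z by blast
        then show ?thesis by (rule on_range[symmetric])
      qed
      finally show ?thesis .
    qed
    then show ?thesis using log_le_iff_eq_on_closure_range[OF L(1) BP] by blast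
  qed
  with BP lower show ?thesis by (simp add: is_log_glb_def P_def)
qed

lemma is_log_lub_comp_proj_Sup:
  assumes T: "T \<subseteq> selfadj_ops"
    and B: "B \<in> selfadj_ops" and upper: "\<forall>A\<in>T. log_le A B"
  shows "is_log_lub T (B \<circ> proj_Sup (range_proj ` T))"
proof -
  define Q where "Q = proj_Sup (range_proj ` T)"
  have saT: "A \<in> selfadj_ops" if "A \<in> T" for A using that T by blast
  note PA = range_proj[OF selfadj_bounded_clinear_op[OF saT]]
  have agree: "A z = B z" if "A \<in> T" "z \<in> closure (range A)" for A z
    using log_le_eq_on_closure_range[OF bspec[OF upper] saT B] that by blast
  have "\<forall>R\<in>range_proj ` T. is_oproj R" using PA(1) by blast
  note Sup = range_proj_Sup[OF this, folded Q_def]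
  have closure_le_Q: "closure (range A) \<subseteq> range Q" if "A \<in> T" for A
    using Sup(2)[of "range_proj A"] PA(2)[OF that] that by simp
  have Q_least: "range Q \<subseteq> N"
    if N: "closed_csubspace N" and sub: "\<And>A. A \<in> T \<Longrightarrow> closure (range A) \<subseteq> N" for N
  proof (rule Sup(3)[OF N], rule ballI)
    fix R assume "R \<in> range_proj ` T"
    then obtain A where "A \<in> T" "R = range_proj A" by blast
    then show "range R \<subseteq> N" using sub PA(2) by simp
  qed
  have "range Q \<subseteq> {z. B z \<in> range Q}"
  proof (rule Q_least)
    show "closed_csubspace {z. B z \<in> range Q}"
      by (intro closed_csubspace_vimage selfadj_bounded_clinear_op B
          closed_csubspace_range_oproj Sup(1))
    show "closure (range A) \<subseteq> {z. B z \<in> range Q}" if "A \<in> T" for A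
      using closure_le_Q[OF that] log_le_invariant_closure_range[OF bspec[OF upper that] saT[OF that] B]
      by blast
  qed
  then have "B (Q x) \<in> range Q" for x by blast
  note BQ = selfadj_comp_oproj_if_invariant[OF B Sup(1) this]
    and closure_BQ = closure_range_comp_oproj_subset[where B = B, OF Sup(1) this]
  have on_range: "(B \<circ> Q) z = B z" if "z \<in> range Q" for z
    using that is_oproj_range_iff[OF Sup(1)] by simp
  have upper_Q: "log_le A (B \<circ> Q)" if A: "A \<in> T" for A
  proof -
    have "A z = (B \<circ> Q) z" if z: "z \<in> closure (range A)" for z
    proof -
      have "z \<in> range Q" using closure_le_Q[OF A] z by blast
      then show ?thesis by (simp only: on_range agree[OF A z])
    qed
    then show ?thesis using log_le_iff_eq_on_closure_range[OF saT[OF A] BQ] by blast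
  qed
  have "log_le (B \<circ> Q) L" if L: "L \<in> selfadj_ops" "\<forall>A\<in>T. log_le A L" for L
  proof -
    have "range Q \<subseteq> {z. L z = B z}"
    proof (rule Q_least)
      show "closed_csubspace {z. L z = B z}"
        by (intro closed_csubspace_eq selfadj_bounded_clinear_op L(1) B)
      show "closure (range A) \<subseteq> {z. L z = B z}" if A: "A \<in> T" for A
        using log_le_eq_on_closure_range[OF bspec[OF L(2) A] saT[OF A] L(1)] agree[OF A] by auto
    qed
    then have "(B \<circ> Q) z = L z" if "z \<in> closure (range (B \<circ> Q))" for z
    proof -
      have z: "z \<in> range Q" using closure_BQ that by blast
      with \<open>range Q \<subseteq> {z. L z = B z}\<close> have "L z = B z" by blast
      with z show ?thesis by (simp only: on_range)
    qed
    then show ?thesis using log_le_iff_eq_on_closure_range[OF BQ L(1)] by blast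
  qed
  with BQ upper_Q show ?thesis by (simp add: is_log_lub_def Q_def)
qed

theorem theorem1:
  fixes T :: "('a::chilbert_space \<Rightarrow> 'a) set" and B :: "'a \<Rightarrow> 'a"
  assumes "T \<subseteq> selfadj_ops" and "T \<noteq> {}"
    and "B \<in> selfadj_ops" and "\<forall>A\<in>T. log_le A B"
  shows "B \<circ> proj_Inf (range_proj ` T) \<in> selfadj_ops
       \<and> B \<circ> proj_Sup (range_proj ` T) \<in> selfadj_ops
       \<and> is_log_glb T (B \<circ> proj_Inf (range_proj ` T))
       \<and> is_log_lub T (B \<circ> proj_Sup (range_proj ` T))"
  using is_log_glb_comp_proj_Inf[OF assms] is_log_lub_comp_proj_Sup[OF assms(1,3,4)]
  by (simp add: is_log_glb_def is_log_lub_def)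

end
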